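(* Let $\Delta>0$, $h>0$, $\alpha\ge 2$, $\mathrm{psd}_{\max}>0$, $\sigma^2>0$. For integers $i,j$ with $i\equiv j \pmod 2$ place a satellite at $\mathbf{s}_{i,j}=(i\Delta/2,\ j\Delta\sqrt3/2,\ h)$, and consider a ground user at $\mathbf{g}=(x,y,0)$, served by the satellite $\mathbf{s}_{0,0}$. Define $D_{i,j}(x,y)=\|\mathbf{s}_{i,j}-\mathbf{g}\|$, $\theta_{i,j}(x,y)=\cos^{-1}\bigl(h/D_{i,j}(x,y)\bigr)$, and $W_{i,j}(x,y)=w_s(\theta_{i,j}(x,y))\,w_g(\theta_{i,j}(x,y))$, where $w_s,w_g:[0,\pi]\to(0,1]$ are the (normalized) satellite and ground antenna patterns. Let $\mathcal{I}=\{(i,j)\in\mathbb{Z}^2: i\equiv j \pmod 2\}\setminus\{(0,0)\}$ and $$\mathrm{SNR}(x,y)=\frac{\mathrm{psd}_{\max}}{\sigma^2}D_{0,0}^{-\alpha}(x,y)W_{0,0}(x,y),\quad \mathrm{INR}(x,y)=\frac{\mathrm{psd}_{\max}}{\sigma^2}\sum_{(i,j)\in\mathcal{I}}D_{i,j}^{-\alpha}(x,y)W_{i,j}(x,y),$$ (assumed finite), and $\mathrm{SINR}(x,y)=\mathrm{SNR}(x,y)/(\mathrm{INR}(x,y)+1)$. Suppose (1) $\theta\mapsto w_s(\theta)w_g(\theta)$ is monotone decreasing on $[0,\pi]$, and (2) for every $(i,j)$ with $i\equiv j\pmod 2$, the ratio $W_{i,j}(x,y)/W_{0,0}(x,y)$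 is convex in $x$ and convex in $y$ on the region $-\Delta/2\le x\le\Delta/2$, $-\Delta\sqrt3/2\le y\le \Delta\sqrt3/2$. Then $\mathrm{SINR}(x,y)$ is maximized over $(x,y)\in\mathbb{R}^2$ at $(x,y)=(0,0)$.
   Context: Planar model of a LEO downlink: satellites lie on a hexagonal lattice in the plane at altitude $h$ above the ground plane, all satellite antennas point straight down and all ground antennas point straight up, so the off-axis angle at both ends of a link is $\theta_{i,j}(x,y)$. All satellites transmit at power spectral density $\mathrm{psd}_{\max}$. *)

theory Defs
  imports "HOL-Analysis.Analysis"
begin

text \<open>Satellite s_{i,j} = (i Delta/2, j Delta sqrt 3/2, h) in R^3 (as real x real x real,
  whose product norm is the Euclidean norm).\<close>
definition sat_pos :: "real \<Rightarrow> real \<Rightarrow> int \<Rightarrow> int \<Rightarrow> real \<times> real \<times> real" where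
  "sat_pos \<Delta> h i j = (real_of_int i * \<Delta> / 2, real_of_int j * \<Delta> * sqrt 3 / 2, h)"

definition Dij :: "real \<Rightarrow> real \<Rightarrow> int \<Rightarrow> int \<Rightarrow> real \<Rightarrow> real \<Rightarrow> real" where
  "Dij \<Delta> h i j x y = norm (sat_pos \<Delta> h i j - (x, y, 0))"

definition theta :: "real \<Rightarrow> real \<Rightarrow> int \<Rightarrow> int \<Rightarrow> real \<Rightarrow> real \<Rightarrow> real" where
  "theta \<Delta> h i j x y = arccos (h / Dij \<Delta> h i j x y)"

definition Wij :: "(real \<Rightarrow> real) \<Rightarrow> (real \<Rightarrow> real) \<Rightarrow> real \<Rightarrow> real \<Rightarrow> int \<Rightarrow> int \<Rightarrow> real \<Rightarrow> real \<Rightarrow> real" where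
  "Wij ws wg \<Delta> h i j x y = ws (theta \<Delta> h i j x y) * wg (theta \<Delta> h i j x y)"

definition lattice_idx :: "(int \<times> int) set" where
  "lattice_idx = {(i, j). i mod 2 = j mod 2}"

definition interferer_idx :: "(int \<times> int) set" where
  "interferer_idx = lattice_idx - {(0, 0)}"

definition SNR :: "(real \<Rightarrow> real) \<Rightarrow> (real \<Rightarrow> real) \<Rightarrow> real \<Rightarrow> real \<Rightarrow> real \<Rightarrow> real \<Rightarrow> real \<Rightarrow> real \<Rightarrow> real \<Rightarrow> real" where
  "SNR ws wg \<Delta> h \<alpha> psd \<sigma>2 x y =
     psd / \<sigma>2 * Dij \<Delta> h 0 0 x y powr (-\<alpha>) * Wij ws wg \<Delta> h 0 0 x y"

definition interf_term :: "(real \<Rightarrow> real) \<Rightarrow> (real \<Rightarrow> real) \<Rightarrow> real \<Rightarrow> real \<Rightarrow> real \<Rightarrow> real \<Rightarrow> real \<Rightarrow> int \<times> int \<Rightarrow> real" where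
  "interf_term ws wg \<Delta> h \<alpha> x y = (\<lambda>(i, j). Dij \<Delta> h i j x y powr (-\<alpha>) * Wij ws wg \<Delta> h i j x y)"

definition INR :: "(real \<Rightarrow> real) \<Rightarrow> (real \<Rightarrow> real) \<Rightarrow> real \<Rightarrow> real \<Rightarrow> real \<Rightarrow> real \<Rightarrow> real \<Rightarrow> real \<Rightarrow> real \<Rightarrow> real" where
  "INR ws wg \<Delta> h \<alpha> psd \<sigma>2 x y =
     psd / \<sigma>2 * infsum (interf_term ws wg \<Delta> h \<alpha> x y) interferer_idx"

definition SINR :: "(real \<Rightarrow> real) \<Rightarrow> (real \<Rightarrow> real) \<Rightarrow> real \<Rightarrow> real \<Rightarrow> real \<Rightarrow> real \<Rightarrow> real \<Rightarrow> real \<Rightarrow> real \<Rightarrow> real" where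
  "SINR ws wg \<Delta> h \<alpha> psd \<sigma>2 x y =
     SNR ws wg \<Delta> h \<alpha> psd \<sigma>2 x y / (INR ws wg \<Delta> h \<alpha> psd \<sigma>2 x y + 1)"

end

theory Submission
  imports Defs
begin

text \<open>
  Write \<open>SINR = S / (I + \<sigma>\<^sup>2 / psd)\<close> with \<open>S\<close> the power received from the serving
  satellite and \<open>I\<close> the interference. The total received power \<open>S + I\<close> is invariant under
  lattice translations, while moving the user by the lattice vector of its nearest satellite can
  only increase \<open>S\<close>; so the SINR does not decrease and it suffices to consider users in the
  rectangle \<open>|x| \<le> \<Delta>/2, |y| \<le> \<Delta>\<surd>3/2\<close>. For such a user and a fixed interferer, the four
  reflections \<open>(\<plusminus>x, \<plusminus>y)\<close> are equidistant from the serving satellite. The path-loss ratio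
  \<open>(D\<^sub>0\<^sub>0 / D\<^sub>i\<^sub>j)\<^sup>\<alpha>\<close> has reflection sum at least four times its value at the origin (parallelogram
  law and AM-GM), and so does the gain ratio \<open>W\<^sub>i\<^sub>j / W\<^sub>0\<^sub>0\<close> (separate convexity), and both decrease with
  \<open>D\<^sub>i\<^sub>j\<close>, so Chebyshev's sum inequality bounds the reflection sum of their product. Summing over
  the interferers and using the symmetry of \<open>I\<close> gives \<open>S(x,y) I(0,0) \<le> S(0,0) I(x,y)\<close>, which
  together with \<open>S(x,y) \<le> S(0,0)\<close> yields the claim.
\<close>

section \<open>Distances and antenna gains\<close>

lemma Dij_eq_norm:
  "Dij \<Delta> h i j x y = norm (real_of_int i * \<Delta> / 2 - x, real_of_int j * \<Delta> * sqrt 3 / 2 - y, h)"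
  unfolding Dij_def sat_pos_def by simp

lemma Dij_eq_sqrt:
  "Dij \<Delta> h i j x y = sqrt ((real_of_int i * \<Delta> / 2 - x)\<^sup>2 + (real_of_int j * \<Delta> * sqrt 3 / 2 - y)\<^sup>2 + h\<^sup>2)"
  unfolding Dij_eq_norm by (simp add: norm_Pair)

lemma Dij_squared:
  "(Dij \<Delta> h i j x y)\<^sup>2 = (real_of_int i * \<Delta> / 2 - x)\<^sup>2 + (real_of_int j * \<Delta> * sqrt 3 / 2 - y)\<^sup>2 + h\<^sup>2"
  unfolding Dij_eq_sqrt by simp

lemma Dij_ge_abs_h: "\<bar>h\<bar> \<le> Dij \<Delta> h i j x y"
  unfolding Dij_eq_norm by (metis norm_snd_le order_trans real_norm_def)

lemma Dij_ge_abs_x: "\<bar>real_of_int i * \<Delta> / 2 - x\<bar> \<le> Dij \<Delta> h i j x y"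
  unfolding Dij_eq_norm by (metis norm_fst_le real_norm_def)

lemma Dij_ge_abs_y: "\<bar>real_of_int j * \<Delta> * sqrt 3 / 2 - y\<bar> \<le> Dij \<Delta> h i j x y"
  unfolding Dij_eq_norm by (metis norm_fst_le norm_snd_le order_trans real_norm_def)

lemma Dij_pos: "h > 0 \<Longrightarrow> 0 < Dij \<Delta> h i j x y"
  using Dij_ge_abs_h[of h \<Delta> i j x y] by simp

lemma Dij_origin: "h > 0 \<Longrightarrow> Dij \<Delta> h 0 0 0 0 = h"
  unfolding Dij_eq_sqrt by simp

lemma Dij_minus_x: "Dij \<Delta> h i j (-x) y = Dij \<Delta> h (-i) j x y"
  unfolding Dij_eq_sqrt by (simp add: power2_eq_square algebra_simps)

lemma Dij_minus_y: "Dij \<Delta> h i j x (-y) = Dij \<Delta> h i (-j) x y"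
  unfolding Dij_eq_sqrt by (simp add: power2_eq_square algebra_simps)

lemma Dij_origin_reflect:
  "(s, t) \<in> {1, -1} \<times> {1, -1} \<Longrightarrow> Dij \<Delta> h 0 0 (s * x) (t * y) = Dij \<Delta> h 0 0 x y"
  by (auto simp: Dij_minus_x Dij_minus_y)

lemma Dij_translate:
  "Dij \<Delta> h i j (x - real_of_int a * \<Delta> / 2) (y - real_of_int b * \<Delta> * sqrt 3 / 2) = Dij \<Delta> h (i + a) (j + b) x y"
  unfolding Dij_eq_sqrt by (simp add: field_simps)

lemma theta_bounds:
  assumes "h > 0"
  shows "theta \<Delta> h i j x y \<in> {0..pi}"
proof -
  have "0 \<le> h / Dij \<Delta> h i j x y" "h / Dij \<Delta> h i j x y \<le> 1"
    using assms Dij_ge_abs_h[of h \<Delta> i j x y] by auto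
  then show ?thesis
    unfolding theta_def by (auto intro: arccos_lbound arccos_ubound)
qed

lemma theta_mono:
  assumes "h > 0" "Dij \<Delta> h i j x y \<le> Dij \<Delta> h k l u v"
  shows "theta \<Delta> h i j x y \<le> theta \<Delta> h k l u v"
proof -
  have "h / Dij \<Delta> h k l u v \<le> h / Dij \<Delta> h i j x y"
    using assms Dij_pos[OF assms(1), of \<Delta> i j x y] by (intro divide_left_mono) auto
  moreover have "h / Dij \<Delta> h i j x y \<le> 1"
    using assms Dij_ge_abs_h[of h \<Delta> i j x y] by auto
  moreover have "0 \<le> h / Dij \<Delta> h k l u v"
    using assms Dij_pos[OF assms(1), of \<Delta> k l u v] by auto
  ultimately show ?thesis
    unfolding theta_def by (intro arccos_le_arccos) auto
qed

lemma Wij_pos: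
  assumes "h > 0" "\<forall>t\<in>{0..pi}. 0 < ws t * wg t"
  shows "0 < Wij ws wg \<Delta> h i j x y"
  using assms theta_bounds[OF assms(1)] unfolding Wij_def by blast

lemma Wij_antimono:
  assumes "h > 0" "Dij \<Delta> h i j x y \<le> Dij \<Delta> h k l u v"
    and "\<forall>a b. 0 \<le> a \<and> a \<le> b \<and> b \<le> pi \<longrightarrow> ws b * wg b \<le> ws a * wg a"
  shows "Wij ws wg \<Delta> h k l u v \<le> Wij ws wg \<Delta> h i j x y"
  using assms theta_mono[OF assms(1,2)] theta_bounds[OF assms(1)] unfolding Wij_def by auto

lemma interf_term_pos:
  assumes "h > 0" "\<forall>t\<in>{0..pi}. 0 < ws t * wg t"
  shows "0 < interf_term ws wg \<Delta> h \<alpha> x y p"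
  using Dij_pos[OF assms(1), of \<Delta> "fst p" "snd p" x y] Wij_pos[OF assms, of \<Delta> "fst p" "snd p" x y]
  unfolding interf_term_def by (simp add: split_def)

lemma infsum_interf_term_nonneg:
  assumes "h > 0" "\<forall>t\<in>{0..pi}. 0 < ws t * wg t"
  shows "0 \<le> infsum (interf_term ws wg \<Delta> h \<alpha> x y) A"
  by (intro infsum_nonneg less_imp_le interf_term_pos[OF assms])

lemma interf_term_antimono:
  assumes "h > 0" "0 \<le> \<alpha>" "\<forall>t\<in>{0..pi}. 0 < ws t * wg t"
    and "\<forall>a b. 0 \<le> a \<and> a \<le> b \<and> b \<le> pi \<longrightarrow> ws b * wg b \<le> ws a * wg a"
    and "Dij \<Delta> h i j x y \<le> Dij \<Delta> h k l u v"
  shows "interf_term ws wg \<Delta> h \<alpha> u v (k, l) \<le> interf_term ws wg \<Delta> h \<alpha> x y (i, j)"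
  unfolding interf_term_def split
proof (rule mult_mono)
  show "Dij \<Delta> h k l u v powr - \<alpha> \<le> Dij \<Delta> h i j x y powr - \<alpha>"
    using assms Dij_pos[OF assms(1), of \<Delta> i j x y] by (intro powr_mono2') auto
  show "Wij ws wg \<Delta> h k l u v \<le> Wij ws wg \<Delta> h i j x y"
    using Wij_antimono[OF assms(1,5,4)] .
  show "0 \<le> Dij \<Delta> h i j x y powr - \<alpha>" by simp
  show "0 \<le> Wij ws wg \<Delta> h k l u v"
    using Wij_pos[OF assms(1,3)] less_imp_le by blast
qed

lemma interf_term_eq_serving_mult:
  assumes "h > 0" "\<forall>t\<in>{0..pi}. 0 < ws t * wg t"
  shows "interf_term ws wg \<Delta> h \<alpha> x y (i, j) = interf_term ws wg \<Delta> h \<alpha> x y (0, 0)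
    * ((Dij \<Delta> h 0 0 x y / Dij \<Delta> h i j x y) powr \<alpha> * (Wij ws wg \<Delta> h i j x y / Wij ws wg \<Delta> h 0 0 x y))"
  using Dij_pos[OF assms(1), of \<Delta> 0 0 x y] Dij_pos[OF assms(1), of \<Delta> i j x y]
    Wij_pos[OF assms, of \<Delta> 0 0 x y]
  unfolding interf_term_def by (simp add: powr_divide powr_minus field_simps)

lemma interf_term_origin_minus:
  shows "interf_term ws wg \<Delta> h \<alpha> (-x) y (0, 0) = interf_term ws wg \<Delta> h \<alpha> x y (0, 0)"
    and "interf_term ws wg \<Delta> h \<alpha> x (-y) (0, 0) = interf_term ws wg \<Delta> h \<alpha> x y (0, 0)"
  by (simp_all add: interf_term_def Wij_def theta_def Dij_minus_x Dij_minus_y)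

lemma Chebyshev_sum_similarly_ordered:
  fixes a b :: "'i \<Rightarrow> 'a::linordered_idom"
  assumes "finite A" and "\<And>i j. i \<in> A \<Longrightarrow> j \<in> A \<Longrightarrow> 0 \<le> (a i - a j) * (b i - b j)"
  shows "(\<Sum>i\<in>A. a i) * (\<Sum>i\<in>A. b i) \<le> of_nat (card A) * (\<Sum>i\<in>A. a i * b i)"
proof -
  have "(\<Sum>i\<in>A. \<Sum>j\<in>A. (a i - a j) * (b i - b j))
      = 2 * (of_nat (card A) * (\<Sum>i\<in>A. a i * b i) - (\<Sum>i\<in>A. a i) * (\<Sum>i\<in>A. b i))"
    by (simp add: algebra_simps sum_subtractf sum.distrib sum_distrib_left sum_distrib_right
        sum.swap[of "\<lambda>i j. a j * b i"] mult_2)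
  moreover have "0 \<le> (\<Sum>i\<in>A. \<Sum>j\<in>A. (a i - a j) * (b i - b j))"
    using assms(2) by (intro sum_nonneg) auto
  ultimately show ?thesis by simp
qed

lemma sum_mult_ge_of_similarly_ordered:
  fixes f g :: "'i \<Rightarrow> real" and a b :: real
  assumes "finite A" "A \<noteq> {}"
    and "\<And>i j. i \<in> A \<Longrightarrow> j \<in> A \<Longrightarrow> 0 \<le> (f i - f j) * (g i - g j)"
    and "0 \<le> a" "0 \<le> b" "real (card A) * a \<le> (\<Sum>i\<in>A. f i)" "real (card A) * b \<le> (\<Sum>i\<in>A. g i)"
  shows "real (card A) * (a * b) \<le> (\<Sum>i\<in>A. f i * g i)"
proof -
  have "real (card A) * (real (card A) * (a * b)) = (real (card A) * a) * (real (card A) * b)"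
    by (simp add: algebra_simps)
  also have "\<dots> \<le> (\<Sum>i\<in>A. f i) * (\<Sum>i\<in>A. g i)"
  proof (rule mult_mono)
    have "0 \<le> real (card A) * a" using assms(4) by simp
    then show "0 \<le> (\<Sum>i\<in>A. f i)" using assms(6) by linarith
  qed (use assms(5-7) in simp_all)
  also have "\<dots> \<le> real (card A) * (\<Sum>i\<in>A. f i * g i)"
    using Chebyshev_sum_similarly_ordered[OF assms(1,3)] by simp
  finally show ?thesis
    using assms(1,2) by (simp add: card_gt_0_iff)
qed

lemma sum_signs:
  fixes f :: "real \<Rightarrow> real \<Rightarrow> real"
  shows "(\<Sum>(s, t)\<in>{1, -1} \<times> {1, -1}. f s t) = f 1 1 + f (-1) 1 + f 1 (-1) + f (-1) (-1)"
  by (subst sum.cartesian_product[symmetric]) simp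

lemma convex_on_symmetric_midpoint:
  fixes f :: "real \<Rightarrow> real"
  assumes "convex_on {-c..c} f" "x \<in> {-c..c}"
  shows "2 * f 0 \<le> f x + f (-x)"
  using convex_onD[OF assms(1), of "1/2" x "-x"] assms(2) by simp

lemma separately_convex_sum_signs:
  fixes f :: "real \<Rightarrow> real \<Rightarrow> real"
  assumes convex_x: "\<And>y. y \<in> {-c..c} \<Longrightarrow> convex_on {-b..b} (\<lambda>x. f x y)"
    and convex_y: "\<And>x. x \<in> {-b..b} \<Longrightarrow> convex_on {-c..c} (\<lambda>y. f x y)"
    and "x \<in> {-b..b}" "y \<in> {-c..c}"
  shows "4 * f 0 0 \<le> (\<Sum>(s, t)\<in>{1, -1} \<times> {1, -1}. f (s * x) (t * y))"
proof -
  have "-y \<in> {-c..c}" "0 \<in> {-b..b}" using assms(3,4) by auto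
  have "2 * f 0 y \<le> f x y + f (-x) y"
    by (rule convex_on_symmetric_midpoint[OF convex_x[OF \<open>y \<in> {-c..c}\<close>] \<open>x \<in> {-b..b}\<close>])
  moreover have "2 * f 0 (-y) \<le> f x (-y) + f (-x) (-y)"
    by (rule convex_on_symmetric_midpoint[OF convex_x[OF \<open>-y \<in> {-c..c}\<close>] \<open>x \<in> {-b..b}\<close>])
  moreover have "2 * f 0 0 \<le> f 0 y + f 0 (-y)"
    by (rule convex_on_symmetric_midpoint[OF convex_y[OF \<open>0 \<in> {-b..b}\<close>] \<open>y \<in> {-c..c}\<close>])
  ultimately show ?thesis unfolding sum_signs by simp
qed

lemma powr_divide_midpoint_le:
  fixes d u v \<beta> :: real
  assumes "0 < d" "0 < u" "0 < v" "0 \<le> \<beta>"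
  shows "2 * (d / ((u + v) / 2)) powr \<beta> \<le> (d / u) powr \<beta> + (d / v) powr \<beta>"
proof -
  have uv: "0 < sqrt (u * v)" "sqrt (u * v) \<le> (u + v) / 2"
    using assms arith_geo_mean_sqrt[of u v] by auto
  have "(d / u) powr \<beta> * (d / v) powr \<beta> = ((d / sqrt (u * v)) powr \<beta>)\<^sup>2"
  proof -
    have "(d / u) * (d / v) = (d / sqrt (u * v)) * (d / sqrt (u * v))"
      using assms by (simp add: real_sqrt_mult field_simps)
    then show ?thesis
      using assms by (simp add: power2_eq_square powr_mult[symmetric])
  qed
  then have gm: "sqrt ((d / u) powr \<beta> * (d / v) powr \<beta>) = (d / sqrt (u * v)) powr \<beta>"
    by simp
  have "(d / ((u + v) / 2)) powr \<beta> \<le> (d / sqrt (u * v)) powr \<beta>"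
    using assms uv by (intro powr_mono2 divide_left_mono) auto
  also have "\<dots> \<le> ((d / u) powr \<beta> + (d / v) powr \<beta>) / 2"
    unfolding gm[symmetric] by (intro arith_geo_mean_sqrt) auto
  finally show ?thesis by simp
qed

lemma powr_divide_eq_squares:
  fixes a b \<alpha> :: real
  assumes "0 < a" "0 < b"
  shows "(a / b) powr \<alpha> = (a\<^sup>2 / b\<^sup>2) powr (\<alpha> / 2)"
proof -
  have "(a / b) powr \<alpha> = ((a / b) powr 2) powr (\<alpha> / 2)"
    by (simp only: powr_powr) simp
  also have "(a / b) powr 2 = a\<^sup>2 / b\<^sup>2"
    using assms by (simp add: power_divide)
  finally show ?thesis .
qed

section \<open>A single interferer seen from the four reflections of the user\<close>

lemma distance_ratio_reflection_sum:
  assumes "h > 0" "0 \<le> \<alpha>"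
  shows "2 * (Dij \<Delta> h 0 0 0 0 / Dij \<Delta> h i j 0 0) powr \<alpha>
    \<le> (Dij \<Delta> h 0 0 x y / Dij \<Delta> h i j x y) powr \<alpha>
      + (Dij \<Delta> h 0 0 (-x) (-y) / Dij \<Delta> h i j (-x) (-y)) powr \<alpha>"
proof -
  define d where "d = (Dij \<Delta> h 0 0 x y)\<^sup>2"
  define P where "P = (Dij \<Delta> h i j 0 0)\<^sup>2 - h\<^sup>2"
  have D_pos: "\<And>i j x y. 0 < Dij \<Delta> h i j x y" using Dij_pos[OF assms(1)] .
  have "h\<^sup>2 \<le> d" "0 \<le> P"
    unfolding d_def P_def Dij_squared by auto
  have d_reflect: "(Dij \<Delta> h 0 0 (-x) (-y))\<^sup>2 = d"
    unfolding d_def Dij_squared by (simp add: power2_eq_square)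
  \<comment> \<open>parallelogram law for the two reflected ground points\<close>
  have midpoint: "((Dij \<Delta> h i j x y)\<^sup>2 + (Dij \<Delta> h i j (-x) (-y))\<^sup>2) / 2 = d + P"
    unfolding d_def P_def Dij_squared by (simp add: power2_eq_square algebra_simps)
  have "h\<^sup>2 * (d + P) \<le> d * (h\<^sup>2 + P)"
    using mult_right_mono[OF \<open>h\<^sup>2 \<le> d\<close> \<open>0 \<le> P\<close>] by (simp add: algebra_simps)
  moreover have "0 < h\<^sup>2 + P" "0 < d + P" "0 < d"
    using \<open>h\<^sup>2 \<le> d\<close> \<open>0 \<le> P\<close> zero_less_power[OF assms(1), of 2] by linarith+
  ultimately have "h\<^sup>2 / (h\<^sup>2 + P) \<le> d / (d + P)"
    by (simp add: field_simps)
  then have "2 * (h\<^sup>2 / (h\<^sup>2 + P)) powr (\<alpha> / 2) \<le> 2 * (d / (d + P)) powr (\<alpha> / 2)"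
    using assms \<open>0 \<le> P\<close> by (simp add: powr_mono2)
  also have "\<dots> \<le> (d / (Dij \<Delta> h i j x y)\<^sup>2) powr (\<alpha> / 2) + (d / (Dij \<Delta> h i j (-x) (-y))\<^sup>2) powr (\<alpha> / 2)"
    unfolding midpoint[symmetric] using assms \<open>0 < d\<close> D_pos[of i j x y] D_pos[of i j "-x" "-y"]
    by (intro powr_divide_midpoint_le) auto
  finally show ?thesis
    using assms(1) D_pos
    by (simp add: powr_divide_eq_squares[of _ _ \<alpha>] Dij_origin d_reflect d_def[symmetric] P_def)
qed

lemma path_loss_gain_ratios_similarly_ordered:
  assumes "h > 0" "0 \<le> \<alpha>"
    and gain_pos: "\<forall>t\<in>{0..pi}. 0 < ws t * wg t"
    and mono: "\<forall>a b. 0 \<le> a \<and> a \<le> b \<and> b \<le> pi \<longrightarrow> ws b * wg b \<le> ws a * wg a"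
    and same_D0: "Dij \<Delta> h 0 0 x y = Dij \<Delta> h 0 0 u v"
  shows "0 \<le> ((Dij \<Delta> h 0 0 x y / Dij \<Delta> h i j x y) powr \<alpha> - (Dij \<Delta> h 0 0 u v / Dij \<Delta> h i j u v) powr \<alpha>)
    * (Wij ws wg \<Delta> h i j x y / Wij ws wg \<Delta> h 0 0 x y - Wij ws wg \<Delta> h i j u v / Wij ws wg \<Delta> h 0 0 u v)"
proof -
  have same_W0: "Wij ws wg \<Delta> h 0 0 x y = Wij ws wg \<Delta> h 0 0 u v"
    using same_D0 unfolding Wij_def theta_def by simp
  have D_pos: "\<And>i j x y. 0 < Dij \<Delta> h i j x y" using Dij_pos[OF assms(1)] .
  have W_pos: "\<And>i j x y. 0 < Wij ws wg \<Delta> h i j x y" using Wij_pos[OF assms(1) gain_pos] .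
  have path_loss_antimono: "(Dij \<Delta> h 0 0 x y / Dij \<Delta> h i j u' v') powr \<alpha>
      \<le> (Dij \<Delta> h 0 0 x y / Dij \<Delta> h i j u'' v'') powr \<alpha>"
    if "Dij \<Delta> h i j u'' v'' \<le> Dij \<Delta> h i j u' v'" for u' v' u'' v''
    using that D_pos[of 0 0 x y] D_pos[of i j u'' v''] assms(2)
    by (intro powr_mono2 divide_left_mono) auto
  have gain_antimono: "Wij ws wg \<Delta> h i j u' v' / Wij ws wg \<Delta> h 0 0 x y
      \<le> Wij ws wg \<Delta> h i j u'' v'' / Wij ws wg \<Delta> h 0 0 x y"
    if "Dij \<Delta> h i j u'' v'' \<le> Dij \<Delta> h i j u' v'" for u' v' u'' v''
    using W_pos[of 0 0 x y] by (intro divide_right_mono Wij_antimono[OF assms(1) that mono]) auto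
  show ?thesis
  proof (cases "Dij \<Delta> h i j x y \<le> Dij \<Delta> h i j u v")
    case True
    then show ?thesis
      using path_loss_antimono[OF True] gain_antimono[OF True]
      unfolding same_D0[symmetric] same_W0[symmetric] by (auto intro: mult_nonneg_nonneg)
  next
    case False
    then have "Dij \<Delta> h i j u v \<le> Dij \<Delta> h i j x y" by simp
    then show ?thesis
      using path_loss_antimono gain_antimono
      unfolding same_D0[symmetric] same_W0[symmetric] by (auto intro: mult_nonpos_nonpos)
  qed
qed

lemma interf_term_reflection_sum:
  fixes ws wg :: "real \<Rightarrow> real" and \<Delta> h \<alpha> b c x y :: real and i j :: int
  assumes "h > 0" "0 \<le> \<alpha>"
    and gain_pos: "\<forall>t\<in>{0..pi}. 0 < ws t * wg t"
    and mono: "\<forall>a b. 0 \<le> a \<and> a \<le> b \<and> b \<le> pi \<longrightarrow> ws b * wg b \<le> ws a * wg a"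
    and convex_x: "\<And>y. y \<in> {-c..c} \<Longrightarrow>
      convex_on {-b..b} (\<lambda>x. Wij ws wg \<Delta> h i j x y / Wij ws wg \<Delta> h 0 0 x y)"
    and convex_y: "\<And>x. x \<in> {-b..b} \<Longrightarrow>
      convex_on {-c..c} (\<lambda>y. Wij ws wg \<Delta> h i j x y / Wij ws wg \<Delta> h 0 0 x y)"
    and "x \<in> {-b..b}" "y \<in> {-c..c}"
  shows "4 * interf_term ws wg \<Delta> h \<alpha> x y (0, 0) * interf_term ws wg \<Delta> h \<alpha> 0 0 (i, j)
    \<le> interf_term ws wg \<Delta> h \<alpha> 0 0 (0, 0)
        * (\<Sum>(s, t)\<in>{1, -1} \<times> {1, -1}. interf_term ws wg \<Delta> h \<alpha> (s * x) (t * y) (i, j))"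
proof -
  define Q where "Q = ({1, -1} \<times> {1, -1} :: (real \<times> real) set)"
  define S where "S u v = interf_term ws wg \<Delta> h \<alpha> u v (0, 0)" for u v
  define a where "a u v = (Dij \<Delta> h 0 0 u v / Dij \<Delta> h i j u v) powr \<alpha>" for u v
  define r where "r u v = Wij ws wg \<Delta> h i j u v / Wij ws wg \<Delta> h 0 0 u v" for u v
  have "real (card Q) * (a 0 0 * r 0 0) \<le> (\<Sum>(s, t)\<in>Q. a (s * x) (t * y) * r (s * x) (t * y))"
    unfolding split_def
  proof (rule sum_mult_ge_of_similarly_ordered)
    show "0 \<le> (a (fst p * x) (snd p * y) - a (fst q * x) (snd q * y))
        * (r (fst p * x) (snd p * y) - r (fst q * x) (snd q * y))" if "p \<in> Q" "q \<in> Q" for p q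
      using Dij_origin_reflect[of "fst p" "snd p"] Dij_origin_reflect[of "fst q" "snd q"] that
      unfolding a_def r_def Q_def
      by (intro path_loss_gain_ratios_similarly_ordered[OF assms(1,2) gain_pos mono]) simp
    show "real (card Q) * a 0 0 \<le> (\<Sum>p\<in>Q. a (fst p * x) (snd p * y))"
      using distance_ratio_reflection_sum[OF assms(1,2), of \<Delta> i j x y]
        distance_ratio_reflection_sum[OF assms(1,2), of \<Delta> i j "-x" y]
      unfolding Q_def split_def[symmetric] sum_signs a_def by simp
    have "4 * r 0 0 \<le> (\<Sum>(s, t)\<in>Q. r (s * x) (t * y))"
      unfolding r_def Q_def
      by (rule separately_convex_sum_signs[where f="\<lambda>u v. Wij ws wg \<Delta> h i j u v / Wij ws wg \<Delta> h 0 0 u v",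
            OF convex_x convex_y assms(7,8)])
    then show "real (card Q) * r 0 0 \<le> (\<Sum>p\<in>Q. r (fst p * x) (snd p * y))"
      unfolding split_def by (simp add: Q_def)
  qed (use Wij_pos[OF assms(1) gain_pos] in \<open>auto simp: Q_def a_def r_def less_imp_le\<close>)
  moreover have "card Q = 4" "0 < S 0 0" "0 < S x y"
    unfolding Q_def S_def using interf_term_pos[OF assms(1) gain_pos] by simp_all
  ultimately have "S 0 0 * (S x y * (4 * (a 0 0 * r 0 0)))
      \<le> S 0 0 * (S x y * (\<Sum>(s, t)\<in>Q. a (s * x) (t * y) * r (s * x) (t * y)))"
    by (intro mult_left_mono) auto
  also have "\<dots> = S 0 0 * (\<Sum>(s, t)\<in>Q. interf_term ws wg \<Delta> h \<alpha> (s * x) (t * y) (i, j))"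
    unfolding interf_term_eq_serving_mult[OF assms(1) gain_pos, of _ _ _ _ i j] sum_distrib_left
    by (intro arg_cong[where f="(*) (S 0 0)"] sum.cong)
      (auto simp: S_def a_def r_def Q_def interf_term_origin_minus)
  finally show ?thesis
    unfolding Q_def[symmetric] interf_term_eq_serving_mult[OF assms(1) gain_pos, of _ _ 0 0 i j] S_def a_def r_def
    by (simp add: algebra_simps)
qed

section \<open>Sums over the lattice\<close>

lemma summable_on_sum:
  fixes f :: "'i \<Rightarrow> 'a \<Rightarrow> 'b::topological_comm_monoid_add"
  assumes "finite F" "\<And>k. k \<in> F \<Longrightarrow> f k summable_on A"
  shows "(\<lambda>x. \<Sum>k\<in>F. f k x) summable_on A"
  using assms by (induction F rule: finite_induct) (auto intro: summable_on_add)

lemma infsum_sum: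
  fixes f :: "'i \<Rightarrow> 'a \<Rightarrow> 'b::{topological_comm_monoid_add, t2_space}"
  assumes "finite F" "\<And>k. k \<in> F \<Longrightarrow> f k summable_on A"
  shows "infsum (\<lambda>x. \<Sum>k\<in>F. f k x) A = (\<Sum>k\<in>F. infsum (f k) A)"
  using assms by (induction F rule: finite_induct) (auto simp: infsum_add summable_on_sum)

lemma bij_betw_interferer_idx_minus:
  shows bij_betw_interferer_idx_minus_fst: "bij_betw (\<lambda>(i, j). (-i, j)) interferer_idx interferer_idx"
    and bij_betw_interferer_idx_minus_snd: "bij_betw (\<lambda>(i, j). (i, -j)) interferer_idx interferer_idx"
  by (rule bij_betwI[where g="\<lambda>(i, j). (-i, j)"] bij_betwI[where g="\<lambda>(i, j). (i, -j)"];
      auto simp: interferer_idx_def lattice_idx_def; presburger)+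

lemma bij_betw_lattice_idx_translate:
  assumes "(a, b) \<in> lattice_idx"
  shows "bij_betw (\<lambda>(i, j). (i + a, j + b)) lattice_idx lattice_idx"
proof (rule bij_betwI[where g="\<lambda>(i, j). (i - a, j - b)"])
  show "(\<lambda>(i, j). (i + a, j + b)) \<in> lattice_idx \<rightarrow> lattice_idx"
    using assms unfolding lattice_idx_def by (auto; presburger)
  show "(\<lambda>(i, j). (i - a, j - b)) \<in> lattice_idx \<rightarrow> lattice_idx"
    using assms unfolding lattice_idx_def by (auto; presburger)
qed auto

lemma infsum_interf_term_minus:
  shows infsum_interf_term_minus_x:
      "infsum (interf_term ws wg \<Delta> h \<alpha> (-x) y) interferer_idx = infsum (interf_term ws wg \<Delta> h \<alpha> x y) interferer_idx"
    and infsum_interf_term_minus_y: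
      "infsum (interf_term ws wg \<Delta> h \<alpha> x (-y)) interferer_idx = infsum (interf_term ws wg \<Delta> h \<alpha> x y) interferer_idx"
proof -
  have "interf_term ws wg \<Delta> h \<alpha> (-x) y = (\<lambda>p. interf_term ws wg \<Delta> h \<alpha> x y ((\<lambda>(i, j). (-i, j)) p))"
    "interf_term ws wg \<Delta> h \<alpha> x (-y) = (\<lambda>p. interf_term ws wg \<Delta> h \<alpha> x y ((\<lambda>(i, j). (i, -j)) p))"
    by (auto simp: interf_term_def Wij_def theta_def Dij_minus_x Dij_minus_y)
  then show "infsum (interf_term ws wg \<Delta> h \<alpha> (-x) y) interferer_idx = infsum (interf_term ws wg \<Delta> h \<alpha> x y) interferer_idx"
    "infsum (interf_term ws wg \<Delta> h \<alpha> x (-y)) interferer_idx = infsum (interf_term ws wg \<Delta> h \<alpha> x y) interferer_idx"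
    by (simp_all add: infsum_reindex_bij_betw bij_betw_interferer_idx_minus)
qed

lemma infsum_interf_term_translate:
  assumes "(a, b) \<in> lattice_idx"
  shows "infsum (interf_term ws wg \<Delta> h \<alpha> (x - real_of_int a * \<Delta> / 2) (y - real_of_int b * \<Delta> * sqrt 3 / 2)) lattice_idx
    = infsum (interf_term ws wg \<Delta> h \<alpha> x y) lattice_idx"
proof -
  have "interf_term ws wg \<Delta> h \<alpha> (x - real_of_int a * \<Delta> / 2) (y - real_of_int b * \<Delta> * sqrt 3 / 2)
      = (\<lambda>p. interf_term ws wg \<Delta> h \<alpha> x y ((\<lambda>(i, j). (i + a, j + b)) p))"
    by (auto simp: interf_term_def Wij_def theta_def Dij_translate)
  then show ?thesis
    by (simp add: infsum_reindex_bij_betw[OF bij_betw_lattice_idx_translate[OF assms]])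
qed

lemma infsum_lattice_idx:
  assumes "interf_term ws wg \<Delta> h \<alpha> x y summable_on interferer_idx"
  shows "infsum (interf_term ws wg \<Delta> h \<alpha> x y) lattice_idx
    = interf_term ws wg \<Delta> h \<alpha> x y (0, 0) + infsum (interf_term ws wg \<Delta> h \<alpha> x y) interferer_idx"
proof -
  have lattice_idx_eq: "lattice_idx = insert (0, 0) interferer_idx"
    and origin_notin: "(0, 0) \<notin> interferer_idx"
    unfolding interferer_idx_def lattice_idx_def by auto
  show ?thesis
    unfolding lattice_idx_eq by (rule infsum_insert[OF assms origin_notin])
qed

lemma interference_signal_cross_le:
  fixes ws wg :: "real \<Rightarrow> real" and \<Delta> h \<alpha> b c x y :: real
  assumes "h > 0" "0 \<le> \<alpha>"
    and gain_pos: "\<forall>t\<in>{0..pi}. 0 < ws t * wg t"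
    and mono: "\<forall>a b. 0 \<le> a \<and> a \<le> b \<and> b \<le> pi \<longrightarrow> ws b * wg b \<le> ws a * wg a"
    and summable: "\<And>x y. interf_term ws wg \<Delta> h \<alpha> x y summable_on interferer_idx"
    and convex_x: "\<And>i j y. (i, j) \<in> interferer_idx \<Longrightarrow> y \<in> {-c..c} \<Longrightarrow>
      convex_on {-b..b} (\<lambda>x. Wij ws wg \<Delta> h i j x y / Wij ws wg \<Delta> h 0 0 x y)"
    and convex_y: "\<And>i j x. (i, j) \<in> interferer_idx \<Longrightarrow> x \<in> {-b..b} \<Longrightarrow>
      convex_on {-c..c} (\<lambda>y. Wij ws wg \<Delta> h i j x y / Wij ws wg \<Delta> h 0 0 x y)"
    and "x \<in> {-b..b}" "y \<in> {-c..c}"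
  shows "infsum (interf_term ws wg \<Delta> h \<alpha> 0 0) interferer_idx * interf_term ws wg \<Delta> h \<alpha> x y (0, 0)
    \<le> infsum (interf_term ws wg \<Delta> h \<alpha> x y) interferer_idx * interf_term ws wg \<Delta> h \<alpha> 0 0 (0, 0)"
proof -
  define Q where "Q = ({1, -1} \<times> {1, -1} :: (real \<times> real) set)"
  define T where "T u v = interf_term ws wg \<Delta> h \<alpha> u v" for u v
  define I where "I u v = infsum (T u v) interferer_idx" for u v
  have "4 * T x y (0, 0) * I 0 0 = infsum (\<lambda>p. 4 * T x y (0, 0) * T 0 0 p) interferer_idx"
    unfolding I_def by (rule infsum_cmult_right'[symmetric])
  also have "\<dots> \<le> infsum (\<lambda>p. T 0 0 (0, 0) * (\<Sum>(s, t)\<in>Q. T (s * x) (t * y) p)) interferer_idx"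
  proof (rule infsum_mono)
    show "(\<lambda>p. 4 * T x y (0, 0) * T 0 0 p) summable_on interferer_idx"
      unfolding T_def using summable by (rule summable_on_cmult_right)
    have "(\<lambda>p. \<Sum>k\<in>Q. (\<lambda>(s, t). T (s * x) (t * y)) k p) summable_on interferer_idx"
      by (rule summable_on_sum) (auto simp: Q_def T_def summable)
    then show "(\<lambda>p. T 0 0 (0, 0) * (\<Sum>(s, t)\<in>Q. T (s * x) (t * y) p)) summable_on interferer_idx"
      by (intro summable_on_cmult_right) (simp add: split_def)
    fix p assume "p \<in> interferer_idx"
    then obtain i j where p: "p = (i, j)" and ij: "(i, j) \<in> interferer_idx" by (cases p) auto
    show "4 * T x y (0, 0) * T 0 0 p \<le> T 0 0 (0, 0) * (\<Sum>(s, t)\<in>Q. T (s * x) (t * y) p)"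
      unfolding T_def Q_def p
      by (rule interf_term_reflection_sum[OF assms(1,2) gain_pos mono
            convex_x[OF ij] convex_y[OF ij] assms(8,9)])
  qed
  also have "\<dots> = T 0 0 (0, 0) * (\<Sum>(s, t)\<in>Q. I (s * x) (t * y))"
    unfolding infsum_cmult_right' I_def T_def Q_def
    using infsum_sum[where f="\<lambda>(s, t). T (s * x) (t * y)" and F="{1, -1} \<times> {1, -1}" and A=interferer_idx] summable
    by (simp add: T_def split_def)
  also have "(\<Sum>(s, t)\<in>Q. I (s * x) (t * y)) = 4 * I x y"
    unfolding Q_def sum_signs I_def T_def by (simp add: infsum_interf_term_minus_x infsum_interf_term_minus_y)
  finally show ?thesis unfolding I_def T_def by (simp add: mult.commute)
qed

section \<open>The nearest satellite\<close>

lemma int_mem_symmetric_range: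
  fixes k :: int and c M :: real
  assumes "0 < c" "\<bar>real_of_int k\<bar> * c \<le> M"
  shows "k \<in> {-\<lceil>M / c\<rceil>..\<lceil>M / c\<rceil>}"
proof -
  have "\<bar>real_of_int k\<bar> \<le> M / c"
    using assms by (simp add: pos_le_divide_eq)
  also have "\<dots> \<le> real_of_int \<lceil>M / c\<rceil>"
    by (rule le_of_int_ceiling)
  finally show ?thesis by auto
qed

lemma finite_lattice_sublevel:
  assumes "\<Delta> > 0"
  shows "finite {(i, j). Dij \<Delta> h i j x y \<le> R}"
proof -
  define M where "M = R + \<bar>x\<bar> + \<bar>y\<bar>"
  have "{(i, j). Dij \<Delta> h i j x y \<le> R} \<subseteq> {-\<lceil>M / (\<Delta> / 2)\<rceil>..\<lceil>M / (\<Delta> / 2)\<rceil>} \<times> {-\<lceil>M / (\<Delta> / 2)\<rceil>..\<lceil>M / (\<Delta> / 2)\<rceil>}"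
  proof clarify
    fix i j assume "Dij \<Delta> h i j x y \<le> R"
    then have "\<bar>real_of_int i * \<Delta> / 2 - x\<bar> \<le> R" "\<bar>real_of_int j * \<Delta> * sqrt 3 / 2 - y\<bar> \<le> R"
      using Dij_ge_abs_x Dij_ge_abs_y order_trans by blast+
    moreover have "\<bar>real_of_int j\<bar> * (\<Delta> / 2) \<le> \<bar>real_of_int j * \<Delta> * sqrt 3 / 2\<bar>"
      using assms mult_left_mono[of 1 "sqrt 3" "\<bar>real_of_int j\<bar> * \<Delta>"] by (simp add: abs_mult)
    ultimately have i: "\<bar>real_of_int i\<bar> * (\<Delta> / 2) \<le> M" and j: "\<bar>real_of_int j\<bar> * (\<Delta> / 2) \<le> M"
      using assms unfolding M_def by (auto simp: abs_mult)
    have "0 < \<Delta> / 2" using assms by simp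
    then show "i \<in> {-\<lceil>M / (\<Delta> / 2)\<rceil>..\<lceil>M / (\<Delta> / 2)\<rceil>} \<and> j \<in> {-\<lceil>M / (\<Delta> / 2)\<rceil>..\<lceil>M / (\<Delta> / 2)\<rceil>}"
      using int_mem_symmetric_range[OF _ i] int_mem_symmetric_range[OF _ j] by blast
  qed
  then show ?thesis by (rule finite_subset) simp
qed

lemma exists_nearest_lattice_point:
  assumes "\<Delta> > 0"
  obtains a b where "(a, b) \<in> lattice_idx"
    and "\<And>i j. (i, j) \<in> lattice_idx \<Longrightarrow> Dij \<Delta> h a b x y \<le> Dij \<Delta> h i j x y"
proof -
  define f where "f p = Dij \<Delta> h (fst p) (snd p) x y" for p
  define F where "F = {p \<in> lattice_idx. f p \<le> f (0, 0)}"
  have "finite F"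
    using finite_lattice_sublevel[OF assms, of h x y "f (0, 0)"]
    unfolding F_def f_def by (rule rev_finite_subset) auto
  moreover have "(0, 0) \<in> F" unfolding F_def lattice_idx_def by simp
  ultimately obtain q where "q \<in> F" and q_min: "\<And>p. p \<in> F \<Longrightarrow> f q \<le> f p"
    using Min_in[of "f ` F"] Min_le[of "f ` F"] by (metis empty_iff finite_imageI imageE image_eqI)
  have "f q \<le> f p" if "p \<in> lattice_idx" for p
  proof (cases "p \<in> F")
    case True
    then show ?thesis by (rule q_min)
  next
    case False
    then have "f (0, 0) < f p" using that unfolding F_def by auto
    moreover have "f q \<le> f (0, 0)" using q_min \<open>(0, 0) \<in> F\<close> .
    ultimately show ?thesis by simp
  qed
  then show ?thesis
    using that[of "fst q" "snd q"] \<open>q \<in> F\<close> unfolding F_def f_def by auto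
qed

lemma abs_le_half_of_square_le:
  fixes u c :: real
  assumes "0 < c" "u\<^sup>2 \<le> (u + c)\<^sup>2" "u\<^sup>2 \<le> (u - c)\<^sup>2"
  shows "\<bar>u\<bar> \<le> c / 2"
proof -
  have "0 \<le> c * (2 * u + c)" "0 \<le> c * (c - 2 * u)"
    using assms(2,3) by (simp_all add: power2_eq_square algebra_simps)
  then show ?thesis
    using assms(1) by (simp add: zero_le_mult_iff)
qed

lemma nearest_lattice_point_offset:
  assumes "\<Delta> > 0" "(a, b) \<in> lattice_idx"
    and nearest: "\<And>i j. (i, j) \<in> lattice_idx \<Longrightarrow> Dij \<Delta> h a b x y \<le> Dij \<Delta> h i j x y"
  shows "x - real_of_int a * \<Delta> / 2 \<in> {-(\<Delta> / 2)..\<Delta> / 2}"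
    and "y - real_of_int b * \<Delta> * sqrt 3 / 2 \<in> {-(\<Delta> * sqrt 3 / 2)..\<Delta> * sqrt 3 / 2}"
proof -
  define u where "u = real_of_int a * \<Delta> / 2 - x"
  define v where "v = real_of_int b * \<Delta> * sqrt 3 / 2 - y"
  have neighbours: "(a + k, b + l) \<in> lattice_idx" if "k mod 2 = 0" "l mod 2 = 0" for k l
    using assms(2) that unfolding lattice_idx_def by auto presburger
  have sq: "u\<^sup>2 + v\<^sup>2 \<le> (u + real_of_int k * \<Delta> / 2)\<^sup>2 + (v + real_of_int l * \<Delta> * sqrt 3 / 2)\<^sup>2"
    if "k mod 2 = 0" "l mod 2 = 0" for k l
  proof -
    have "(Dij \<Delta> h a b x y)\<^sup>2 \<le> (Dij \<Delta> h (a + k) (b + l) x y)\<^sup>2"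
      using nearest[OF neighbours[OF that]] Dij_ge_abs_h[of h \<Delta> a b x y] by (intro power_mono) auto
    moreover have "real_of_int (a + k) * \<Delta> / 2 - x = u + real_of_int k * \<Delta> / 2"
      "real_of_int (b + l) * \<Delta> * sqrt 3 / 2 - y = v + real_of_int l * \<Delta> * sqrt 3 / 2"
      unfolding u_def v_def by (simp_all add: field_simps)
    ultimately show ?thesis
      unfolding Dij_squared u_def[symmetric] v_def[symmetric] by simp
  qed
  have "u\<^sup>2 \<le> (u + \<Delta>)\<^sup>2" "u\<^sup>2 \<le> (u - \<Delta>)\<^sup>2"
    using sq[of 2 0] sq[of "-2" 0] by simp_all
  moreover have "v\<^sup>2 \<le> (v + \<Delta> * sqrt 3)\<^sup>2" "v\<^sup>2 \<le> (v - \<Delta> * sqrt 3)\<^sup>2"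
    using sq[of 0 2] sq[of 0 "-2"] by simp_all
  ultimately have "\<bar>u\<bar> \<le> \<Delta> / 2" "\<bar>v\<bar> \<le> \<Delta> * sqrt 3 / 2"
    using assms(1) abs_le_half_of_square_le[of "\<Delta> * sqrt 3" v] abs_le_half_of_square_le[of \<Delta> u] by simp_all
  then show "x - real_of_int a * \<Delta> / 2 \<in> {-(\<Delta> / 2)..\<Delta> / 2}"
    and "y - real_of_int b * \<Delta> * sqrt 3 / 2 \<in> {-(\<Delta> * sqrt 3 / 2)..\<Delta> * sqrt 3 / 2}"
    unfolding u_def v_def abs_le_iff by auto
qed

lemma SINR_eq:
  "SINR ws wg \<Delta> h \<alpha> psd \<sigma>2 x y = psd / \<sigma>2 * interf_term ws wg \<Delta> h \<alpha> x y (0, 0)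
    / (psd / \<sigma>2 * infsum (interf_term ws wg \<Delta> h \<alpha> x y) interferer_idx + 1)"
  unfolding SINR_def SNR_def INR_def interf_term_def by (simp add: mult.assoc)

lemma signal_ratio_le_of_same_total:
  fixes c S I S' I' :: real
  assumes "0 < c" "0 \<le> S" "S \<le> S'" "0 \<le> I" "0 \<le> I'" "S + I = S' + I'"
  shows "c * S / (c * I + 1) \<le> c * S' / (c * I' + 1)"
proof -
  have "I = S' + I' - S" using assms(6) by simp
  then have "c * S' * (c * I + 1) - c * S * (c * I' + 1) = c * (S' - S) * (c * (S' + I') + 1)"
    by (simp only:) (simp add: algebra_simps)
  moreover have "0 \<le> c * (S' - S) * (c * (S' + I') + 1)"
    using assms by (intro mult_nonneg_nonneg add_nonneg_nonneg) auto
  moreover have "0 < c * I + 1" "0 < c * I' + 1"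
    using assms by (simp_all add: add_nonneg_pos)
  ultimately show ?thesis
    by (simp add: field_simps)
qed

lemma signal_ratio_le_of_cross_le:
  fixes c S I S0 I0 :: real
  assumes "0 < c" "S \<le> S0" "0 \<le> I" "0 \<le> I0" "I0 * S \<le> I * S0"
  shows "c * S / (c * I + 1) \<le> c * S0 / (c * I0 + 1)"
proof -
  have "c * c * (I0 * S) \<le> c * c * (I * S0)"
    using assms by (intro mult_left_mono) auto
  moreover have "c * S \<le> c * S0"
    using assms by simp
  ultimately have "c * S * (c * I0 + 1) \<le> c * S0 * (c * I + 1)"
    by (simp add: algebra_simps)
  moreover have "0 < c * I + 1" "0 < c * I0 + 1"
    using assms by (simp_all add: add_nonneg_pos)
  ultimately show ?thesis
    by (simp add: field_simps)
qed

lemma SINR_le_origin_on_rectangle: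
  fixes ws wg :: "real \<Rightarrow> real" and \<Delta> h \<alpha> psd \<sigma>2 b c x y :: real
  assumes "h > 0" "0 \<le> \<alpha>" "0 < psd" "0 < \<sigma>2"
    and gain_pos: "\<forall>t\<in>{0..pi}. 0 < ws t * wg t"
    and mono: "\<forall>a b. 0 \<le> a \<and> a \<le> b \<and> b \<le> pi \<longrightarrow> ws b * wg b \<le> ws a * wg a"
    and summable: "\<And>x y. interf_term ws wg \<Delta> h \<alpha> x y summable_on interferer_idx"
    and convex_x: "\<And>i j y. (i, j) \<in> interferer_idx \<Longrightarrow> y \<in> {-c..c} \<Longrightarrow>
      convex_on {-b..b} (\<lambda>x. Wij ws wg \<Delta> h i j x y / Wij ws wg \<Delta> h 0 0 x y)"
    and convex_y: "\<And>i j x. (i, j) \<in> interferer_idx \<Longrightarrow> x \<in> {-b..b} \<Longrightarrow>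
      convex_on {-c..c} (\<lambda>y. Wij ws wg \<Delta> h i j x y / Wij ws wg \<Delta> h 0 0 x y)"
    and "x \<in> {-b..b}" "y \<in> {-c..c}"
  shows "SINR ws wg \<Delta> h \<alpha> psd \<sigma>2 x y \<le> SINR ws wg \<Delta> h \<alpha> psd \<sigma>2 0 0"
  unfolding SINR_eq
proof (rule signal_ratio_le_of_cross_le)
  show "interf_term ws wg \<Delta> h \<alpha> x y (0, 0) \<le> interf_term ws wg \<Delta> h \<alpha> 0 0 (0, 0)"
    using Dij_ge_abs_h[of h \<Delta> 0 0 x y] assms(1)
    by (intro interf_term_antimono[OF assms(1,2) gain_pos mono]) (simp add: Dij_origin)
  show "infsum (interf_term ws wg \<Delta> h \<alpha> 0 0) interferer_idx * interf_term ws wg \<Delta> h \<alpha> x y (0, 0)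
    \<le> infsum (interf_term ws wg \<Delta> h \<alpha> x y) interferer_idx * interf_term ws wg \<Delta> h \<alpha> 0 0 (0, 0)"
    by (rule interference_signal_cross_le[OF assms(1,2) gain_pos mono summable convex_x convex_y assms(10,11)])
qed (use assms(3,4) infsum_interf_term_nonneg[OF assms(1) gain_pos] in simp_all)

lemma SINR_le_at_lattice_offset:
  fixes ws wg :: "real \<Rightarrow> real" and \<Delta> h \<alpha> psd \<sigma>2 x y :: real
  assumes "0 < \<Delta>" "h > 0" "0 \<le> \<alpha>" "0 < psd" "0 < \<sigma>2"
    and gain_pos: "\<forall>t\<in>{0..pi}. 0 < ws t * wg t"
    and mono: "\<forall>a b. 0 \<le> a \<and> a \<le> b \<and> b \<le> pi \<longrightarrow> ws b * wg b \<le> ws a * wg a"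
    and summable: "\<And>x y. interf_term ws wg \<Delta> h \<alpha> x y summable_on interferer_idx"
  obtains x' y' where "x' \<in> {-(\<Delta> / 2)..\<Delta> / 2}" "y' \<in> {-(\<Delta> * sqrt 3 / 2)..\<Delta> * sqrt 3 / 2}"
    and "SINR ws wg \<Delta> h \<alpha> psd \<sigma>2 x y \<le> SINR ws wg \<Delta> h \<alpha> psd \<sigma>2 x' y'"
proof -
  obtain a b where "(a, b) \<in> lattice_idx"
    and nearest: "\<And>i j. (i, j) \<in> lattice_idx \<Longrightarrow> Dij \<Delta> h a b x y \<le> Dij \<Delta> h i j x y"
    using exists_nearest_lattice_point[OF assms(1)] by blast
  define x' where "x' = x - real_of_int a * \<Delta> / 2"
  define y' where "y' = y - real_of_int b * \<Delta> * sqrt 3 / 2"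
  have total: "interf_term ws wg \<Delta> h \<alpha> u v (0, 0) + infsum (interf_term ws wg \<Delta> h \<alpha> u v) interferer_idx
      = infsum (interf_term ws wg \<Delta> h \<alpha> u v) lattice_idx" for u v
    using infsum_lattice_idx[OF summable] by simp
  have "SINR ws wg \<Delta> h \<alpha> psd \<sigma>2 x y \<le> SINR ws wg \<Delta> h \<alpha> psd \<sigma>2 x' y'"
    unfolding SINR_eq
  proof (rule signal_ratio_le_of_same_total)
    show "interf_term ws wg \<Delta> h \<alpha> x y (0, 0) \<le> interf_term ws wg \<Delta> h \<alpha> x' y' (0, 0)"
      unfolding x'_def y'_def using nearest[of 0 0]
      by (intro interf_term_antimono[OF assms(2,3) gain_pos mono]) (simp add: Dij_translate lattice_idx_def)
    show "interf_term ws wg \<Delta> h \<alpha> x y (0, 0) + infsum (interf_term ws wg \<Delta> h \<alpha> x y) interferer_idx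
      = interf_term ws wg \<Delta> h \<alpha> x' y' (0, 0) + infsum (interf_term ws wg \<Delta> h \<alpha> x' y') interferer_idx"
      unfolding total x'_def y'_def by (rule infsum_interf_term_translate[OF \<open>(a, b) \<in> lattice_idx\<close>, symmetric])
  qed (use assms(4,5) infsum_interf_term_nonneg[OF assms(2) gain_pos]
      interf_term_pos[OF assms(2) gain_pos, THEN less_imp_le] in simp_all)
  moreover have "x' \<in> {-(\<Delta> / 2)..\<Delta> / 2}" "y' \<in> {-(\<Delta> * sqrt 3 / 2)..\<Delta> * sqrt 3 / 2}"
    unfolding x'_def y'_def using nearest_lattice_point_offset[OF assms(1) \<open>(a, b) \<in> lattice_idx\<close> nearest]
    by simp_all
  ultimately show ?thesis using that by blast
qed

theorem proposition2:
  fixes ws wg :: "real \<Rightarrow> real" and \<Delta> h \<alpha> psd \<sigma>2 :: real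
  assumes "\<Delta> > 0" and "h > 0" and "\<alpha> \<ge> 2" and "psd > 0" and "\<sigma>2 > 0"
    and ws_range: "\<forall>t\<in>{0..pi}. 0 < ws t \<and> ws t \<le> 1"
    and wg_range: "\<forall>t\<in>{0..pi}. 0 < wg t \<and> wg t \<le> 1"
    and finite_INR: "\<forall>x y. interf_term ws wg \<Delta> h \<alpha> x y summable_on interferer_idx"
    and mono: "\<forall>a b. 0 \<le> a \<and> a \<le> b \<and> b \<le> pi \<longrightarrow> ws b * wg b \<le> ws a * wg a"
    and convex_x: "\<forall>(i, j)\<in>lattice_idx. \<forall>y\<in>{-\<Delta> * sqrt 3 / 2..\<Delta> * sqrt 3 / 2}.
        convex_on {-\<Delta>/2..\<Delta>/2} (\<lambda>x. Wij ws wg \<Delta> h i j x y / Wij ws wg \<Delta> h 0 0 x y)"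
    and convex_y: "\<forall>(i, j)\<in>lattice_idx. \<forall>x\<in>{-\<Delta>/2..\<Delta>/2}.
        convex_on {-\<Delta> * sqrt 3 / 2..\<Delta> * sqrt 3 / 2} (\<lambda>y. Wij ws wg \<Delta> h i j x y / Wij ws wg \<Delta> h 0 0 x y)"
  shows "\<forall>x y. SINR ws wg \<Delta> h \<alpha> psd \<sigma>2 x y \<le> SINR ws wg \<Delta> h \<alpha> psd \<sigma>2 0 0"
proof (intro allI)
  fix x y
  have "0 \<le> \<alpha>" using assms(3) by simp
  have gain_pos: "\<forall>t\<in>{0..pi}. 0 < ws t * wg t" using ws_range wg_range by auto
  have summable: "\<And>x y. interf_term ws wg \<Delta> h \<alpha> x y summable_on interferer_idx"
    using finite_INR by blast
  have rectangle: "{-\<Delta>/2..\<Delta>/2} = {-(\<Delta> / 2)..\<Delta> / 2}"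
      "{-\<Delta> * sqrt 3 / 2..\<Delta> * sqrt 3 / 2} = {-(\<Delta> * sqrt 3 / 2)..\<Delta> * sqrt 3 / 2}"
    by simp_all
  obtain x' y' where "x' \<in> {-(\<Delta> / 2)..\<Delta> / 2}" "y' \<in> {-(\<Delta> * sqrt 3 / 2)..\<Delta> * sqrt 3 / 2}"
    and offset: "SINR ws wg \<Delta> h \<alpha> psd \<sigma>2 x y \<le> SINR ws wg \<Delta> h \<alpha> psd \<sigma>2 x' y'"
    using SINR_le_at_lattice_offset[OF assms(1,2) \<open>0 \<le> \<alpha>\<close> assms(4,5) gain_pos mono summable] .
  have "SINR ws wg \<Delta> h \<alpha> psd \<sigma>2 x' y' \<le> SINR ws wg \<Delta> h \<alpha> psd \<sigma>2 0 0"
    by (rule SINR_le_origin_on_rectangle[OF assms(2) \<open>0 \<le> \<alpha>\<close> assms(4,5) gain_pos mono summable _ _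
          \<open>x' \<in> _\<close> \<open>y' \<in> _\<close>])
      (use convex_x convex_y in \<open>auto simp: interferer_idx_def rectangle\<close>)
  with offset show "SINR ws wg \<Delta> h \<alpha> psd \<sigma>2 x y \<le> SINR ws wg \<Delta> h \<alpha> psd \<sigma>2 0 0"
    by (rule order_trans)
qed

end
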